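(* Let $R$ be a commutative Noetherian ring with unity, $\lambda$ a length function on $R$-modules, $T$ a finitely generated commutative $R$-algebra, $M$ a $T$-module, and $M_0\le M$ an $R$-submodule which is finitely generated as an $R$-module, with $\lambda(M_0)<\infty$ and $TM_0=M$. Let $\bar\gamma\in T^k$ and $\bar\delta\in T^{k'}$ be two tuples of generators of $T$ as an $R$-algebra. Then the Hilbert polynomials $q_{\bar\gamma}$ and $q_{\bar\delta}$ of $M_0$ with respect to $\bar\gamma$ and $\bar\delta$ have the same degree; i.e. $\langle M;\bar\gamma\rangle$ and $\langle M;\bar\delta\rangle$ have the same $\lambda$-dimension.
   Context: A length function on $R$-modules is a function $\lambda$ from $R$-modules to $\mathbb{R}_{\ge0}\cup\{\infty\}$ with $\lambda(0)=0$, invariant under isomorphism, additive on short exact sequences, and with $\lambda(N)=\sup\{\lambda(N'):N'\le N$ finitely generated$\}$. For a tuple $\bar\gamma=(\gamma_1,\dots,\gamma_k)$ generating $T$, let $\phi:R[x_1,\dots,x_k]\to T$ be the surjective $R$-algebra homomorphism with $x_i\mapsto\gamma_i$; $\langle M;\bar\gamma\rangle$ is $M$ viewed as an $R[x_1,\dots,x_k]$-module via $\phi$. Let $T_n=\phi(S_n)$ where $S_n$ is the set of polynomials of total degree $\le n$. Then there is a polynomial $q_{\bar\gamma}\in\mathbb{R}[t]$ with $\lambda(T_nM_0)=q_{\bar\gamma}(n)$ for all large $n$; the $\lambda$-dimension of $\langle M;\bar\gamma\rangle$ is the degree of its leading term. *)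

theory Defs
  imports Complex_Main "HOL-Library.Extended_Real" "HOL-Computational_Algebra.Polynomial"
begin

text \<open>Ring homomorphism between (types of) commutative rings with unity:
  this is the structure map making T an R-algebra.\<close>
definition ring_hom_fun :: "('r::comm_ring_1 \<Rightarrow> 't::comm_ring_1) \<Rightarrow> bool" where
  "ring_hom_fun \<phi> \<longleftrightarrow> \<phi> 1 = 1 \<and> (\<forall>a b. \<phi> (a + b) = \<phi> a + \<phi> b) \<and> (\<forall>a b. \<phi> (a * b) = \<phi> a * \<phi> b)"

definition noetherian_ring :: "'r::comm_ring_1 itself \<Rightarrow> bool" where
  "noetherian_ring _ \<longleftrightarrow>
     (\<forall>I::'r set. module.subspace (*) I \<longrightarrow> (\<exists>F. finite F \<and> I = module.span (*) F))"

definition rscale :: "('r \<Rightarrow> 't) \<Rightarrow> ('t \<Rightarrow> 'm \<Rightarrow> 'm) \<Rightarrow> 'r \<Rightarrow> 'm \<Rightarrow> 'm" where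
  "rscale \<phi> sm r x = sm (\<phi> r) x"

definition Rsub :: "('r::comm_ring_1 \<Rightarrow> 't) \<Rightarrow> ('t \<Rightarrow> 'm::ab_group_add \<Rightarrow> 'm) \<Rightarrow> 'm set \<Rightarrow> bool" where
  "Rsub \<phi> sm N \<longleftrightarrow> module.subspace (rscale \<phi> sm) N"

definition Rspan :: "('r::comm_ring_1 \<Rightarrow> 't) \<Rightarrow> ('t \<Rightarrow> 'm::ab_group_add \<Rightarrow> 'm) \<Rightarrow> 'm set \<Rightarrow> 'm set" where
  "Rspan \<phi> sm S = module.span (rscale \<phi> sm) S"

text \<open>A length function, evaluated on the subquotients N/N' (N' \<subseteq> N R-submodules of M):
  lam N N' stands for \<lambda>(N/N').  Axioms: values in [0,\<infinity>], \<lambda>(0) = 0, invariance under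
  isomorphism of subquotients, additivity on short exact sequences (chains N'' \<subseteq> N' \<subseteq> N,
  which together with isomorphism invariance gives additivity on all short exact sequences
  of subquotients), and \<lambda>(N/N') = sup of \<lambda> over finitely generated submodules of N/N'.\<close>
definition length_function :: "('r::comm_ring_1 \<Rightarrow> 't::comm_ring_1) \<Rightarrow> ('t \<Rightarrow> 'm::ab_group_add \<Rightarrow> 'm)
    \<Rightarrow> ('m set \<Rightarrow> 'm set \<Rightarrow> ereal) \<Rightarrow> bool" where
  "length_function \<phi> sm lam \<longleftrightarrow>
     lam {0} {0} = 0
   \<and> (\<forall>N N'. Rsub \<phi> sm N \<and> Rsub \<phi> sm N' \<and> N' \<subseteq> N \<longrightarrow> 0 \<le> lam N N')
   \<and> (\<forall>N N' P P' (f::'m \<Rightarrow> 'm).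
        Rsub \<phi> sm N \<and> Rsub \<phi> sm N' \<and> N' \<subseteq> N \<and> Rsub \<phi> sm P \<and> Rsub \<phi> sm P' \<and> P' \<subseteq> P
        \<and> (\<forall>x\<in>N. \<forall>y\<in>N. f (x + y) = f x + f y)
        \<and> (\<forall>r. \<forall>x\<in>N. f (rscale \<phi> sm r x) = rscale \<phi> sm r (f x))
        \<and> f ` N \<subseteq> P
        \<and> (\<forall>x\<in>N. f x \<in> P' \<longleftrightarrow> x \<in> N')
        \<and> (\<forall>z\<in>P. \<exists>x\<in>N. \<exists>y\<in>P'. z = f x + y)
        \<longrightarrow> lam N N' = lam P P')
   \<and> (\<forall>N N' N''. Rsub \<phi> sm N \<and> Rsub \<phi> sm N' \<and> Rsub \<phi> sm N'' \<and> N'' \<subseteq> N' \<and> N' \<subseteq> N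
        \<longrightarrow> lam N N'' = lam N N' + lam N' N'')
   \<and> (\<forall>N N'. Rsub \<phi> sm N \<and> Rsub \<phi> sm N' \<and> N' \<subseteq> N \<longrightarrow>
        lam N N' = (SUP F\<in>{F. finite F \<and> F \<subseteq> N}. lam (Rspan \<phi> sm (F \<union> N')) N'))"

definition monomials_le :: "(nat \<Rightarrow> 't::comm_ring_1) \<Rightarrow> nat \<Rightarrow> nat \<Rightarrow> 't set" where
  "monomials_le \<gamma> k n = {(\<Prod>i<k. \<gamma> i ^ \<alpha> i) | \<alpha>. (\<Sum>i<k. \<alpha> i) \<le> n}"

text \<open>T_n = \<phi>(S_n): values at \<gamma> of R-polynomials of total degree \<le> n (the R-span of
  the monomials of degree \<le> n, R acting on T through \<phi>).\<close>
definition Tdeg :: "('r::comm_ring_1 \<Rightarrow> 't::comm_ring_1) \<Rightarrow> (nat \<Rightarrow> 't) \<Rightarrow> nat \<Rightarrow> nat \<Rightarrow> 't set" where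
  "Tdeg \<phi> \<gamma> k n = module.span (\<lambda>r t. \<phi> r * t) (monomials_le \<gamma> k n)"

definition generates_algebra :: "('r::comm_ring_1 \<Rightarrow> 't::comm_ring_1) \<Rightarrow> (nat \<Rightarrow> 't) \<Rightarrow> nat \<Rightarrow> bool" where
  "generates_algebra \<phi> \<gamma> k \<longleftrightarrow> (\<Union>n. Tdeg \<phi> \<gamma> k n) = UNIV"

definition TnM0 :: "('r::comm_ring_1 \<Rightarrow> 't::comm_ring_1) \<Rightarrow> ('t \<Rightarrow> 'm::ab_group_add \<Rightarrow> 'm)
    \<Rightarrow> (nat \<Rightarrow> 't) \<Rightarrow> nat \<Rightarrow> 'm set \<Rightarrow> nat \<Rightarrow> 'm set" where
  "TnM0 \<phi> sm \<gamma> k M0 n = Rspan \<phi> sm {sm t x | t x. t \<in> Tdeg \<phi> \<gamma> k n \<and> x \<in> M0}"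

end

theory Submission
  imports Defs
begin

(* Every generator of one tuple is a polynomial of degree at most some d in the other tuple,
   so the degree filtrations are comparable: T'_n \<subseteq> T_{dn}, hence T'_n M0 \<subseteq> T_{dn} M0.
   Monotonicity of the length function gives 0 \<le> q(n) \<le> p(dn) for large n, and a polynomial that
   is eventually dominated by p(d x) on the naturals cannot have larger degree than p.
   By symmetry the degrees agree. *)

lemma degree_le_if_eventually_poly_le:
  fixes p q :: "real poly"
  assumes le: "\<forall>\<^sub>F n in sequentially. 0 \<le> poly q (real n) \<and> poly q (real n) \<le> poly p (real n)"
  shows "degree q \<le> degree p"
proof (rule ccontr)
  assume "\<not> degree q \<le> degree p"
  then have deg: "degree p < degree q" by simp
  then have "q \<noteq> 0" by auto
  have real_at_infinity: "filterlim real at_infinity sequentially"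
    using filterlim_real_sequentially at_top_le_at_infinity filterlim_mono by blast
  have ratio_0: "(\<lambda>n. poly p (real n) / poly q (real n)) \<longlonglongrightarrow> 0"
    using poly_divide_tendsto_0_at_infinity[OF deg] real_at_infinity by (rule filterlim_compose)
  have "\<forall>\<^sub>F n in sequentially. poly q (real n) \<noteq> 0"
    using poly_eventually_not_zero[OF \<open>q \<noteq> 0\<close>] real_at_infinity by (rule eventually_compose_filterlim)
  with le have "\<forall>\<^sub>F n in sequentially. 1 \<le> poly p (real n) / poly q (real n)"
    by eventually_elim simp
  from tendsto_le[OF _ ratio_0 tendsto_const this] show False by simp
qed

lemma degree_le_if_eventually_poly_le_rescaled:
  fixes p q :: "real poly"
  assumes "d > 0"
    and le: "\<forall>\<^sub>F n in sequentially. 0 \<le> poly q (real n) \<and> poly q (real n) \<le> poly p (real (d * n))"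
  shows "degree q \<le> degree p"
proof -
  have "degree q \<le> degree (p \<circ>\<^sub>p [:0, real d:])"
    using le by (intro degree_le_if_eventually_poly_le) (simp add: poly_pcompose mult.commute)
  with \<open>d > 0\<close> show ?thesis by (simp add: degree_pcompose)
qed

lemma module_ring_hom_scale:
  fixes \<phi> :: "'r::comm_ring_1 \<Rightarrow> 't::comm_ring_1"
  assumes "ring_hom_fun \<phi>"
  shows "module (\<lambda>r t. \<phi> r * t)"
  using assms unfolding ring_hom_fun_def
  by unfold_locales (auto simp: algebra_simps)

lemma module_rscale:
  fixes \<phi> :: "'r::comm_ring_1 \<Rightarrow> 't::comm_ring_1" and sm :: "'t \<Rightarrow> 'm::ab_group_add \<Rightarrow> 'm"
  assumes "ring_hom_fun \<phi>" and "module sm"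
  shows "module (rscale \<phi> sm)"
proof -
  interpret M: module sm by fact
  show ?thesis
    using assms(1) unfolding ring_hom_fun_def rscale_def
    by unfold_locales (auto simp: M.scale_right_distrib M.scale_left_distrib)
qed

lemma mult_in_span_if_generators_mult_in_span:
  fixes \<phi> :: "'r::comm_ring_1 \<Rightarrow> 't::comm_ring_1"
  assumes hom: "ring_hom_fun \<phi>"
    and x: "x \<in> module.span (\<lambda>r t. \<phi> r * t) A"
    and y: "y \<in> module.span (\<lambda>r t. \<phi> r * t) B"
    and AB: "\<And>a b. a \<in> A \<Longrightarrow> b \<in> B \<Longrightarrow> a * b \<in> module.span (\<lambda>r t. \<phi> r * t) C"
  shows "x * y \<in> module.span (\<lambda>r t. \<phi> r * t) C"
proof -
  interpret S: module "\<lambda>r t. \<phi> r * t" by (rule module_ring_hom_scale[OF hom])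
  have left_mult_subspace: "S.subspace {z. a * z \<in> S.span C}" for a
    by (rule S.subspaceI)
      (auto simp: distrib_left mult.left_commute[of a] intro: S.span_zero S.span_add S.span_scale)
  have right_mult_subspace: "S.subspace {z. z * b \<in> S.span C}" for b
    by (rule S.subspaceI)
      (auto simp: distrib_right mult.assoc intro: S.span_zero S.span_add S.span_scale)
  have generator_times_span: "a * y \<in> S.span C" if "a \<in> A" for a
  proof -
    have "S.span B \<subseteq> {z. a * z \<in> S.span C}"
      using AB \<open>a \<in> A\<close> by (intro S.span_minimal left_mult_subspace) auto
    with y show ?thesis by auto
  qed
  have "S.span A \<subseteq> {z. z * y \<in> S.span C}"
    using generator_times_span by (intro S.span_minimal right_mult_subspace) auto
  with x show ?thesis by auto
qed

lemma Tdeg_mono: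
  assumes hom: "ring_hom_fun \<phi>" and "a \<le> b"
  shows "Tdeg \<phi> \<gamma> k a \<subseteq> Tdeg \<phi> \<gamma> k b"
proof -
  interpret S: module "\<lambda>r t. \<phi> r * t" by (rule module_ring_hom_scale[OF hom])
  have "monomials_le \<gamma> k a \<subseteq> monomials_le \<gamma> k b"
    using \<open>a \<le> b\<close> unfolding monomials_le_def by auto
  then show ?thesis unfolding Tdeg_def by (rule S.span_mono)
qed

lemma one_in_Tdeg:
  assumes hom: "ring_hom_fun \<phi>"
  shows "1 \<in> Tdeg \<phi> \<gamma> k 0"
proof -
  interpret S: module "\<lambda>r t. \<phi> r * t" by (rule module_ring_hom_scale[OF hom])
  have "1 \<in> monomials_le \<gamma> k 0"
    unfolding monomials_le_def by (intro CollectI exI[of _ "\<lambda>_. 0"]) simp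
  then show ?thesis unfolding Tdeg_def by (rule S.span_base)
qed

lemma mult_in_Tdeg:
  assumes hom: "ring_hom_fun \<phi>"
    and x: "x \<in> Tdeg \<phi> \<gamma> k a" and y: "y \<in> Tdeg \<phi> \<gamma> k b"
  shows "x * y \<in> Tdeg \<phi> \<gamma> k (a + b)"
  using x y unfolding Tdeg_def
proof (rule mult_in_span_if_generators_mult_in_span[OF hom])
  interpret S: module "\<lambda>r t. \<phi> r * t" by (rule module_ring_hom_scale[OF hom])
  fix u v assume "u \<in> monomials_le \<gamma> k a" and "v \<in> monomials_le \<gamma> k b"
  then obtain \<alpha> \<beta> where u: "u = (\<Prod>i<k. \<gamma> i ^ \<alpha> i)" "(\<Sum>i<k. \<alpha> i) \<le> a"
    and v: "v = (\<Prod>i<k. \<gamma> i ^ \<beta> i)" "(\<Sum>i<k. \<beta> i) \<le> b"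
    unfolding monomials_le_def by blast
  have "u * v = (\<Prod>i<k. \<gamma> i ^ (\<alpha> i + \<beta> i))"
    by (simp add: u v power_add prod.distrib)
  moreover have "(\<Sum>i<k. \<alpha> i + \<beta> i) \<le> a + b"
    using u v by (simp add: sum.distrib)
  ultimately have "u * v \<in> monomials_le \<gamma> k (a + b)"
    unfolding monomials_le_def by (intro CollectI exI[of _ "\<lambda>i. \<alpha> i + \<beta> i"]) simp
  then show "u * v \<in> S.span (monomials_le \<gamma> k (a + b))" by (rule S.span_base)
qed

lemma power_in_Tdeg:
  assumes hom: "ring_hom_fun \<phi>" and x: "x \<in> Tdeg \<phi> \<gamma> k d"
  shows "x ^ m \<in> Tdeg \<phi> \<gamma> k (d * m)"
proof (induction m)
  case 0
  then show ?case using one_in_Tdeg[OF hom] by simp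
next
  case (Suc m)
  from mult_in_Tdeg[OF hom x Suc] show ?case by (simp add: add.commute)
qed

lemma prod_power_in_Tdeg:
  assumes hom: "ring_hom_fun \<phi>" and "finite I" and x: "\<And>i. i \<in> I \<Longrightarrow> x i \<in> Tdeg \<phi> \<gamma> k d"
  shows "(\<Prod>i\<in>I. x i ^ \<beta> i) \<in> Tdeg \<phi> \<gamma> k (d * (\<Sum>i\<in>I. \<beta> i))"
  using \<open>finite I\<close> x
proof (induction I rule: finite_induct)
  case empty
  then show ?case using one_in_Tdeg[OF hom] by simp
next
  case (insert j I)
  have "x j ^ \<beta> j * (\<Prod>i\<in>I. x i ^ \<beta> i) \<in> Tdeg \<phi> \<gamma> k (d * \<beta> j + d * (\<Sum>i\<in>I. \<beta> i))"
    using insert by (intro mult_in_Tdeg[OF hom] power_in_Tdeg[OF hom]) auto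
  then show ?case using insert by (simp add: distrib_left)
qed

lemma generates_algebra_Tdeg_subset:
  assumes hom: "ring_hom_fun \<phi>" and gen: "generates_algebra \<phi> \<gamma> k"
  obtains d where "d > 0" and "\<And>n. Tdeg \<phi> \<delta> k' n \<subseteq> Tdeg \<phi> \<gamma> k (d * n)"
proof -
  interpret S: module "\<lambda>r t. \<phi> r * t" by (rule module_ring_hom_scale[OF hom])
  have "\<forall>i. \<exists>m. \<delta> i \<in> Tdeg \<phi> \<gamma> k m"
    using gen unfolding generates_algebra_def by blast
  then obtain f where f: "\<And>i. \<delta> i \<in> Tdeg \<phi> \<gamma> k (f i)"
    by metis
  define d where "d = Max (f ` {..<k'}) + 1"
  have \<delta>_in: "\<delta> i \<in> Tdeg \<phi> \<gamma> k d" if "i < k'" for i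
  proof -
    have "f i \<le> Max (f ` {..<k'})"
      using that by (intro Max_ge) auto
    then show ?thesis
      using f[of i] Tdeg_mono[OF hom, of "f i" d] by (auto simp: d_def)
  qed
  have "Tdeg \<phi> \<delta> k' n \<subseteq> Tdeg \<phi> \<gamma> k (d * n)" for n
    unfolding Tdeg_def[of \<phi> \<delta>]
  proof (rule S.span_minimal)
    show "S.subspace (Tdeg \<phi> \<gamma> k (d * n))" unfolding Tdeg_def by simp
    show "monomials_le \<delta> k' n \<subseteq> Tdeg \<phi> \<gamma> k (d * n)"
    proof
      fix u assume "u \<in> monomials_le \<delta> k' n"
      then obtain \<beta> where u: "u = (\<Prod>i<k'. \<delta> i ^ \<beta> i)" and "(\<Sum>i<k'. \<beta> i) \<le> n"
        unfolding monomials_le_def by blast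
      have "u \<in> Tdeg \<phi> \<gamma> k (d * (\<Sum>i<k'. \<beta> i))"
        unfolding u by (rule prod_power_in_Tdeg[OF hom]) (auto intro: \<delta>_in)
      also have "\<dots> \<subseteq> Tdeg \<phi> \<gamma> k (d * n)"
        using \<open>(\<Sum>i<k'. \<beta> i) \<le> n\<close> by (intro Tdeg_mono[OF hom]) simp
      finally show "u \<in> Tdeg \<phi> \<gamma> k (d * n)" .
    qed
  qed
  moreover have "d > 0" by (simp add: d_def)
  ultimately show ?thesis using that by blast
qed

lemma Rsub_TnM0:
  assumes "ring_hom_fun \<phi>" and "module sm"
  shows "Rsub \<phi> sm (TnM0 \<phi> sm \<gamma> k M0 n)"
  unfolding Rsub_def TnM0_def Rspan_def
  by (rule module.subspace_span[OF module_rscale[OF assms]])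

lemma TnM0_mono:
  assumes "ring_hom_fun \<phi>" and "module sm" and "Tdeg \<phi> \<gamma> k n \<subseteq> Tdeg \<phi> \<delta> k' m"
  shows "TnM0 \<phi> sm \<gamma> k M0 n \<subseteq> TnM0 \<phi> sm \<delta> k' M0 m"
  unfolding TnM0_def Rspan_def
  by (rule module.span_mono[OF module_rscale[OF assms(1,2)]]) (use assms(3) in blast)

lemma length_function_nonneg:
  assumes "length_function \<phi> sm lam" and "Rsub \<phi> sm N" and "Rsub \<phi> sm N'" and "N' \<subseteq> N"
  shows "0 \<le> lam N N'"
  using assms unfolding length_function_def by blast

lemma length_function_mono:
  assumes len: "length_function \<phi> sm lam" and "module (rscale \<phi> sm)"
    and N: "Rsub \<phi> sm N" and N': "Rsub \<phi> sm N'" and "N' \<subseteq> N"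
  shows "lam N' {0} \<le> lam N {0}"
proof -
  interpret R: module "rscale \<phi> sm" by fact
  have zero: "Rsub \<phi> sm {0}" unfolding Rsub_def by simp
  have "{0} \<subseteq> N'" using N' R.subspace_0 unfolding Rsub_def by auto
  then have "lam N {0} = lam N N' + lam N' {0}"
    using len N N' zero \<open>N' \<subseteq> N\<close> unfolding length_function_def by blast
  with length_function_nonneg[OF len N N' \<open>N' \<subseteq> N\<close>] show ?thesis
    by (simp add: add_increasing)
qed

lemma degree_le_if_length_subset_rescaled:
  fixes p q :: "real poly"
  assumes len: "length_function \<phi> sm lam" and "module (rscale \<phi> sm)"
    and A: "\<And>n. Rsub \<phi> sm (A n)" and B: "\<And>n. Rsub \<phi> sm (B n)"
    and "d > 0" and AB: "\<And>n. A n \<subseteq> B (d * n)"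
    and hilb_A: "\<forall>\<^sub>F n in sequentially. lam (A n) {0} = ereal (poly q (real n))"
    and hilb_B: "\<forall>\<^sub>F n in sequentially. lam (B n) {0} = ereal (poly p (real n))"
  shows "degree q \<le> degree p"
proof (rule degree_le_if_eventually_poly_le_rescaled[OF \<open>d > 0\<close>])
  interpret R: module "rscale \<phi> sm" by fact
  have zero_le: "0 \<le> lam (A n) {0}" for n
    using A[of n] R.subspace_0 by (intro length_function_nonneg[OF len]) (auto simp: Rsub_def)
  have "filterlim (\<lambda>n. d * n) sequentially sequentially"
    using \<open>d > 0\<close> by (intro filterlim_subseq) (simp add: strict_mono_def)
  then have "\<forall>\<^sub>F n in sequentially. lam (B (d * n)) {0} = ereal (poly p (real (d * n)))"
    by (rule eventually_compose_filterlim[OF hilb_B])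
  with hilb_A show "\<forall>\<^sub>F n in sequentially.
      0 \<le> poly q (real n) \<and> poly q (real n) \<le> poly p (real (d * n))"
  proof eventually_elim
    case (elim n)
    from zero_le[of n] length_function_mono[OF len \<open>module _\<close> B A AB[of n]] show ?case
      unfolding elim zero_ereal_def ereal_less_eq by simp
  qed
qed

theorem lemma7p3:
  fixes \<phi> :: "'r::comm_ring_1 \<Rightarrow> 't::comm_ring_1"
    and sm :: "'t \<Rightarrow> 'm::ab_group_add \<Rightarrow> 'm"
    and lam :: "'m set \<Rightarrow> 'm set \<Rightarrow> ereal"
    and M0 :: "'m set"
    and \<gamma> \<delta> :: "nat \<Rightarrow> 't" and k k' :: nat
    and p q :: "real poly"
  assumes noeth: "noetherian_ring TYPE('r)"
    and alg: "ring_hom_fun \<phi>"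
    and modT: "module sm"
    and len: "length_function \<phi> sm lam"
    and M0_sub: "Rsub \<phi> sm M0"
    and M0_fg: "\<exists>F. finite F \<and> M0 = Rspan \<phi> sm F"
    and M0_fin: "lam M0 {0} < \<infinity>"
    and TM0: "module.span sm M0 = UNIV"
    and gen_\<gamma>: "generates_algebra \<phi> \<gamma> k"
    and gen_\<delta>: "generates_algebra \<phi> \<delta> k'"
    and hilb_\<gamma>: "eventually (\<lambda>n. lam (TnM0 \<phi> sm \<gamma> k M0 n) {0} = ereal (poly p (real n))) sequentially"
    and hilb_\<delta>: "eventually (\<lambda>n. lam (TnM0 \<phi> sm \<delta> k' M0 n) {0} = ereal (poly q (real n))) sequentially"
  shows "degree p = degree q"
proof -
  \<comment> \<open>The hypotheses on R and M0 only serve to guarantee that the Hilbert polynomials p and q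
      exist; given p and q, comparing the two degree filtrations suffices.\<close>
  note modR = module_rscale[OF alg modT]
  note Rsub = Rsub_TnM0[OF alg modT]
  obtain d where d: "d > 0" "\<And>n. Tdeg \<phi> \<delta> k' n \<subseteq> Tdeg \<phi> \<gamma> k (d * n)"
    using generates_algebra_Tdeg_subset[OF alg gen_\<gamma>] by blast
  obtain e where e: "e > 0" "\<And>n. Tdeg \<phi> \<gamma> k n \<subseteq> Tdeg \<phi> \<delta> k' (e * n)"
    using generates_algebra_Tdeg_subset[OF alg gen_\<delta>] by blast
  have "degree q \<le> degree p"
    using d hilb_\<delta> hilb_\<gamma>
    by (intro degree_le_if_length_subset_rescaled[OF len modR, where A = "TnM0 \<phi> sm \<delta> k' M0"
          and B = "TnM0 \<phi> sm \<gamma> k M0"] Rsub TnM0_mono[OF alg modT]) auto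
  moreover have "degree p \<le> degree q"
    using e hilb_\<gamma> hilb_\<delta>
    by (intro degree_le_if_length_subset_rescaled[OF len modR, where A = "TnM0 \<phi> sm \<gamma> k M0"
          and B = "TnM0 \<phi> sm \<delta> k' M0"] Rsub TnM0_mono[OF alg modT]) auto
  ultimately show ?thesis by simp
qed

end
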